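(* Let $\mathcal{H}$ be a separable infinite-dimensional complex Hilbert space. Suppose that $\sigma$ is a right closed subset of $[0,1]$ with $1\in\sigma$. Then there exists a quasinilpotent operator $T\in\mathcal{B}(\mathcal{H})$ such that $\Lambda(T)=\sigma$.
   Context: An operator $T$ is quasinilpotent if $\sigma(T)=\{0\}$. For quasinilpotent $T$ and $x\neq 0$, $k_x(T)=\limsup_{\lambda\to0}\frac{\ln\|(\lambda-T)^{-1}x\|}{\ln\|(\lambda-T)^{-1}\|}$, and the power set is $\Lambda(T)=\{k_x(T): x\neq0\}$. A nonempty set $X\subseteq\mathbb{R}$ is right closed if $\sup Y\in X$ for every nonempty bounded subset $Y$ of $X$. *)

theory Defs
  imports "HOL-Analysis.Analysis"
begin

text \<open>The model of a separable infinite-dimensional complex Hilbert space: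
  the sequence space l2(N; C).  Every such space is unitarily equivalent to it.\<close>

definition l2 :: "(nat \<Rightarrow> complex) set" where
  "l2 = {x. summable (\<lambda>n. (cmod (x n))^2)}"

definition l2norm :: "(nat \<Rightarrow> complex) \<Rightarrow> real" where
  "l2norm x = sqrt (\<Sum>n. (cmod (x n))^2)"

definition bounded_op :: "((nat \<Rightarrow> complex) \<Rightarrow> (nat \<Rightarrow> complex)) \<Rightarrow> bool" where
  "bounded_op T \<longleftrightarrow>
     (\<forall>x\<in>l2. T x \<in> l2) \<and>
     (\<forall>x\<in>l2. \<forall>y\<in>l2. T (\<lambda>n. x n + y n) = (\<lambda>n. T x n + T y n)) \<and>
     (\<forall>x\<in>l2. \<forall>c::complex. T (\<lambda>n. c * x n) = (\<lambda>n. c * T x n)) \<and>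
     (\<exists>K. \<forall>x\<in>l2. l2norm (T x) \<le> K * l2norm x)"

definition opnorm :: "((nat \<Rightarrow> complex) \<Rightarrow> (nat \<Rightarrow> complex)) \<Rightarrow> real" where
  "opnorm A = Sup {l2norm (A x) | x. x \<in> l2 \<and> l2norm x \<le> 1}"

definition shift_op :: "complex \<Rightarrow> ((nat \<Rightarrow> complex) \<Rightarrow> (nat \<Rightarrow> complex))
    \<Rightarrow> (nat \<Rightarrow> complex) \<Rightarrow> (nat \<Rightarrow> complex)" where
  "shift_op l T x = (\<lambda>n. l * x n - T x n)"

definition invertible_op :: "((nat \<Rightarrow> complex) \<Rightarrow> (nat \<Rightarrow> complex)) \<Rightarrow> bool" where
  "invertible_op A \<longleftrightarrow> (\<exists>S. bounded_op S \<and> (\<forall>x\<in>l2. S (A x) = x \<and> A (S x) = x))"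

definition op_spectrum :: "((nat \<Rightarrow> complex) \<Rightarrow> (nat \<Rightarrow> complex)) \<Rightarrow> complex set" where
  "op_spectrum T = {l. \<not> invertible_op (shift_op l T)}"

definition quasinilpotent :: "((nat \<Rightarrow> complex) \<Rightarrow> (nat \<Rightarrow> complex)) \<Rightarrow> bool" where
  "quasinilpotent T \<longleftrightarrow> op_spectrum T = {0}"

definition resolvent :: "((nat \<Rightarrow> complex) \<Rightarrow> (nat \<Rightarrow> complex)) \<Rightarrow> complex
    \<Rightarrow> (nat \<Rightarrow> complex) \<Rightarrow> (nat \<Rightarrow> complex)" where
  "resolvent T l x = (THE y. y \<in> l2 \<and> shift_op l T y = x)"

definition local_power :: "((nat \<Rightarrow> complex) \<Rightarrow> (nat \<Rightarrow> complex)) \<Rightarrow> (nat \<Rightarrow> complex) \<Rightarrow> ereal" where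
  "local_power T x = Limsup (at (0::complex))
     (\<lambda>l. ereal (ln (l2norm (resolvent T l x)) / ln (opnorm (resolvent T l))))"

definition power_set :: "((nat \<Rightarrow> complex) \<Rightarrow> (nat \<Rightarrow> complex)) \<Rightarrow> ereal set" where
  "power_set T = {local_power T x | x. x \<in> l2 \<and> x \<noteq> (\<lambda>n. 0)}"

definition right_closed :: "real set \<Rightarrow> bool" where
  "right_closed X \<longleftrightarrow> X \<noteq> {} \<and> (\<forall>Y. Y \<noteq> {} \<and> Y \<subseteq> X \<and> bdd_above Y \<longrightarrow> Sup Y \<in> X)"

end

theory Submission
  imports Defs "HOL-Complex_Analysis.Cauchy_Integral_Formula" "HOL-Real_Asymp.Real_Asymp"
begin

text \<open>Index the basis of l2 by pairs (i, j) and let T act on the i-th block as a weighted shift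
  with weights a^(2j-1), a = exp(-1/s_i), for labels s_i \<in> [0, 1].  Then T^k has weights about
  a^(k^2), and since max_k r^k exp(-k^2/t) = exp(t (ln r)^2/4) the resolvent grows on block i
  like exp(s_i (ln (1/|l|))^2/4), up to factors polynomial in 1/|l|.  A block with label 1
  governs the norm of the resolvent, so k_x(T) is the supremum of the labels of the blocks
  on which x lives.  Right closedness puts this supremum in sigma; conversely, if the labels
  are a countable subset of sigma approximating each of its points from below, every t in
  sigma is the power of a vector supported on the blocks with labels at most t.\<close>

section \<open>Square-summable sequences indexed by pairs\<close>

lemma norm_le_l2norm:
  assumes "x \<in> l2" shows "cmod (x n) \<le> l2norm x"
proof -
  have "(\<Sum>m\<in>{n}. (cmod (x m))^2) \<le> (\<Sum>m. (cmod (x m))^2)"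
    using assms by (intro sum_le_suminf) (auto simp: l2_def)
  then have "(cmod (x n))^2 \<le> (\<Sum>m. (cmod (x m))^2)" by simp
  then have "sqrt ((cmod (x n))^2) \<le> l2norm x"
    unfolding l2norm_def by (rule real_sqrt_le_mono)
  then show ?thesis by simp
qed

lemma l2norm_pos: "x \<in> l2 \<Longrightarrow> x n \<noteq> 0 \<Longrightarrow> 0 < l2norm x"
  using norm_le_l2norm[of x n] by (meson order_less_le_trans zero_less_norm_iff)

lemma zero_in_l2: "(\<lambda>n. 0) \<in> l2" and l2norm_zero: "l2norm (\<lambda>n. 0) = 0"
  by (simp_all add: l2_def l2norm_def)

lemma geometric_restrict_in_l2: "(\<lambda>n. if P n then (1/2)^n else 0 :: complex) \<in> l2"
  unfolding l2_def mem_Collect_eq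
proof (rule summable_comparison_test)
  show "summable (\<lambda>n. (1/4::real)^n)" by (rule summable_geometric) simp
  have "(cmod (if P n then (1/2)^n else 0 :: complex))^2 \<le> (1/4)^n" for n
  proof -
    have "(cmod (if P n then (1/2)^n else 0 :: complex))^2 \<le> ((1/2)^n)^2"
      by (intro power_mono) (auto simp: norm_power)
    also have "\<dots> = ((1/2)^2)^n" by (simp only: power_mult[symmetric] mult.commute)
    also have "\<dots> = (1/4)^n" by (simp add: power2_eq_square)
    finally show ?thesis .
  qed
  then show "\<exists>N. \<forall>n\<ge>N. norm ((cmod (if P n then (1/2)^n else 0 :: complex))^2) \<le> (1/4)^n"
    by simp
qed

lemma fun_eq_prod_encodeI: "(\<And>i j. f (prod_encode (i,j)) = g (prod_encode (i,j))) \<Longrightarrow> f = g"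
  by (metis ext prod_decode_inverse surj_pair)

lemma ex_prod_encode_nonzero:
  assumes "x \<noteq> (\<lambda>n. 0)" obtains i j where "x (prod_encode (i,j)) \<noteq> 0"
  using assms by (metis prod_decode_inverse surj_pair)

lemma first_nonzero_in_block:
  assumes "x (prod_encode (i,j)) \<noteq> 0"
  obtains m where "x (prod_encode (i,m)) \<noteq> 0" "\<forall>j<m. x (prod_encode (i,j)) = 0"
  using LeastI[of "\<lambda>m. x (prod_encode (i,m)) \<noteq> 0", OF assms] not_less_Least by blast

lemma weighted_Cauchy_Schwarz:
  fixes c b :: "nat \<Rightarrow> real"
  assumes "\<And>k. 0 \<le> c k"
  shows "(\<Sum>k\<in>I. c k * b k)^2 \<le> (\<Sum>k\<in>I. c k) * (\<Sum>k\<in>I. c k * (b k)^2)"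
proof -
  have "(\<Sum>k\<in>I. sqrt (c k) * (sqrt (c k) * b k))^2
        \<le> (\<Sum>k\<in>I. (sqrt (c k))^2) * (\<Sum>k\<in>I. (sqrt (c k) * b k)^2)"
    by (rule Cauchy_Schwarz_ineq_sum)
  then show ?thesis
    using assms by (simp add: power_mult_distrib mult.assoc[symmetric])
qed

lemma sum_block_shift_le_suminf:
  fixes f :: "nat \<Rightarrow> real"
  assumes "summable f" "\<And>n. 0 \<le> f n" "finite A"
  shows "(\<Sum>n\<in>{n\<in>A. k \<le> snd (prod_decode n)}.
            f (prod_encode (fst (prod_decode n), snd (prod_decode n) - k))) \<le> suminf f"
proof -
  define p where "p n = prod_encode (fst (prod_decode n), snd (prod_decode n) - k)" for n
  have "inj_on p {n\<in>A. k \<le> snd (prod_decode n)}"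
  proof (rule inj_onI)
    fix n n' assume "n \<in> {n\<in>A. k \<le> snd (prod_decode n)}" "n' \<in> {n\<in>A. k \<le> snd (prod_decode n)}"
      and "p n = p n'"
    then have "prod_decode n = prod_decode n'"
      unfolding p_def by (auto simp: prod_eq_iff)
    then show "n = n'" by (metis prod_decode_inverse)
  qed
  then have "(\<Sum>n\<in>{n\<in>A. k \<le> snd (prod_decode n)}. f (p n)) = sum f (p ` {n\<in>A. k \<le> snd (prod_decode n)})"
    by (simp add: sum.reindex)
  also have "\<dots> \<le> suminf f" using assms by (intro sum_le_suminf) auto
  finally show ?thesis by (simp add: p_def)
qed

text \<open>Young's inequality for convolution with c along the second coordinate of prod_encode (i, j).\<close>
lemma l2_block_convolution:
  fixes c :: "nat \<Rightarrow> real" and x y :: "nat \<Rightarrow> complex"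
  assumes x: "x \<in> l2" and c0: "\<And>k. 0 \<le> c k" and c: "summable c"
    and y: "\<And>i j. cmod (y (prod_encode (i,j))) \<le> (\<Sum>k\<le>j. c k * cmod (x (prod_encode (i, j-k))))"
  shows "y \<in> l2 \<and> l2norm y \<le> suminf c * l2norm x"
proof -
  define C where "C = suminf c"
  define X where "X = (\<Sum>n. (cmod (x n))^2)"
  define p where "p k n = prod_encode (fst (prod_decode n), snd (prod_decode n) - k)" for k n
  have C0: "0 \<le> C" unfolding C_def using c c0 by (rule suminf_nonneg)
  have X0: "0 \<le> X" unfolding X_def using x by (intro suminf_nonneg) (auto simp: l2_def)
  have csum: "(\<Sum>k\<in>I. c k) \<le> C" if "finite I" for I
    unfolding C_def using c that c0 by (intro sum_le_suminf) auto
  have pointwise: "(cmod (y n))^2 \<le> C * (\<Sum>k<N. if k \<le> snd (prod_decode n) then c k * (cmod (x (p k n)))^2 else 0)"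
    if "n < N" for n N
  proof -
    define j where "j = snd (prod_decode n)"
    have "n = prod_encode (fst (prod_decode n), j)" by (simp add: j_def)
    then have "cmod (y n) \<le> (\<Sum>k\<le>j. c k * cmod (x (p k n)))"
      using y[of "fst (prod_decode n)" j] by (simp add: p_def j_def)
    then have "(cmod (y n))^2 \<le> (\<Sum>k\<le>j. c k * cmod (x (p k n)))^2"
      by (intro power_mono) auto
    also have "\<dots> \<le> (\<Sum>k\<le>j. c k) * (\<Sum>k\<le>j. c k * (cmod (x (p k n)))^2)"
      by (rule weighted_Cauchy_Schwarz[OF c0])
    also have "\<dots> \<le> C * (\<Sum>k\<le>j. c k * (cmod (x (p k n)))^2)"
      by (intro mult_right_mono csum) (auto intro!: sum_nonneg mult_nonneg_nonneg c0)
    also have "{..j} = {k\<in>{..<N}. k \<le> j}"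
      using le_prod_encode_2[of j "fst (prod_decode n)"] that by (auto simp: j_def)
    finally show ?thesis by (simp add: sum.inter_filter[symmetric] j_def)
  qed
  have partial: "(\<Sum>n<N. (cmod (y n))^2) \<le> C * (C * X)" for N
  proof -
    have "(\<Sum>n<N. (cmod (y n))^2)
        \<le> (\<Sum>n<N. C * (\<Sum>k<N. if k \<le> snd (prod_decode n) then c k * (cmod (x (p k n)))^2 else 0))"
      by (intro sum_mono pointwise) simp
    also have "\<dots> = C * (\<Sum>k<N. c k * (\<Sum>n\<in>{n\<in>{..<N}. k \<le> snd (prod_decode n)}. (cmod (x (p k n)))^2))"
      unfolding sum_distrib_left[symmetric]
      by (subst sum.swap) (simp add: sum.inter_filter[symmetric] sum_distrib_left if_distrib cong: if_cong)
    also have "\<dots> \<le> C * (\<Sum>k<N. c k * X)"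
      unfolding X_def p_def using x
      by (intro mult_left_mono C0 sum_mono mult_left_mono c0 sum_block_shift_le_suminf)
        (auto simp: l2_def)
    also have "\<dots> \<le> C * (C * X)"
      unfolding sum_distrib_right[symmetric] by (intro mult_left_mono C0 mult_right_mono X0 csum) auto
    finally show ?thesis .
  qed
  have sy: "summable (\<lambda>n. (cmod (y n))^2)"
    by (rule summableI_nonneg_bounded[OF _ partial]) auto
  have "(\<Sum>n. (cmod (y n))^2) \<le> C^2 * X"
    using suminf_le_const[OF sy partial] by (simp add: power2_eq_square mult.assoc)
  then have "l2norm y \<le> sqrt (C^2 * X)" unfolding l2norm_def by simp
  also have "\<dots> = C * l2norm x" using C0 by (simp add: real_sqrt_mult l2norm_def X_def)
  finally show ?thesis using sy by (simp add: l2_def C_def)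
qed

section \<open>A direct sum of weighted shifts\<close>

definition shift_base :: "real \<Rightarrow> real" where
  "shift_base t = (if t = 0 then 0 else exp (-1/t))"

text \<open>The weights of k consecutive steps ending at (i,j) multiply to a^((2(j-k)+k)k), so the
  Neumann series of (l - T)^-1 has the coefficients used in block_resolvent.\<close>
definition block_shift :: "(nat \<Rightarrow> real) \<Rightarrow> (nat \<Rightarrow> complex) \<Rightarrow> nat \<Rightarrow> complex" where
  "block_shift s x n = (case prod_decode n of (i,j) \<Rightarrow>
     if j = 0 then 0 else complex_of_real (shift_base (s i) ^ (2*j-1)) * x (prod_encode (i, j-1)))"

definition block_resolvent :: "(nat \<Rightarrow> real) \<Rightarrow> complex \<Rightarrow> (nat \<Rightarrow> complex) \<Rightarrow> nat \<Rightarrow> complex" where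
  "block_resolvent s l x n = (case prod_decode n of (i,j) \<Rightarrow>
     \<Sum>k\<le>j. complex_of_real (shift_base (s i) ^ ((2*(j-k)+k)*k)) / l^(k+1) * x (prod_encode (i, j-k)))"

lemma block_shift_prod_encode: "block_shift s x (prod_encode (i,j)) =
   (if j = 0 then 0 else complex_of_real (shift_base (s i) ^ (2*j-1)) * x (prod_encode (i, j-1)))"
  by (simp add: block_shift_def)

lemma block_resolvent_prod_encode: "block_resolvent s l x (prod_encode (i,j)) =
   (\<Sum>k\<le>j. complex_of_real (shift_base (s i) ^ ((2*(j-k)+k)*k)) / l^(k+1) * x (prod_encode (i, j-k)))"
  by (simp add: block_resolvent_def)

lemma shift_base_nonneg: "0 \<le> shift_base t"
  by (simp add: shift_base_def)

lemma shift_base_le_one: "0 \<le> t \<Longrightarrow> shift_base t \<le> 1"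
  by (simp add: shift_base_def)

lemma shift_base_one: "shift_base 1 = exp (-1)"
  by (simp add: shift_base_def)

lemma block_shift_bounded:
  assumes s: "\<forall>i. 0 \<le> s i"
  shows "bounded_op (block_shift s)"
proof -
  define c :: "nat \<Rightarrow> real" where "c k = (if k = 1 then 1 else 0)" for k
  have "summable c" unfolding c_def by (rule summable_finite[of "{1}"]) auto
  moreover have "suminf c = 1" unfolding c_def by (subst suminf_finite[of "{1}"]) auto
  ultimately have c: "summable c" "suminf c = 1" .
  have "cmod (block_shift s x (prod_encode (i,j))) \<le> (\<Sum>k\<le>j. c k * cmod (x (prod_encode (i, j-k))))"
    for x i j
  proof (cases "j = 0")
    case False
    have "(\<Sum>k\<le>j. c k * cmod (x (prod_encode (i, j-k)))) = cmod (x (prod_encode (i, j-1)))"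
      unfolding c_def using False by (subst sum.mono_neutral_cong_right[of _ "{1}"]) auto
    moreover have "shift_base (s i) ^ (2*j-1) \<le> 1"
      using shift_base_le_one[of "s i"] s shift_base_nonneg by (simp add: power_le_one)
    ultimately show ?thesis using shift_base_nonneg[of "s i"]
      by (simp add: block_shift_prod_encode norm_mult norm_power mult_left_le_one_le)
  qed (simp add: block_shift_prod_encode c_def)
  then have "x \<in> l2 \<Longrightarrow> block_shift s x \<in> l2 \<and> l2norm (block_shift s x) \<le> 1 * l2norm x" for x
    using l2_block_convolution[of x c] c by (auto simp: c_def)
  then show ?thesis unfolding bounded_op_def
    by (auto intro!: fun_eq_prod_encodeI exI[of _ 1] simp: block_shift_prod_encode distrib_left mult_ac)
qed

lemma shift_op_block_resolvent:
  assumes l: "l \<noteq> 0"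
  shows "shift_op l (block_shift s) (block_resolvent s l x) = x"
proof (rule fun_eq_prod_encodeI)
  fix i j
  define a where "a = complex_of_real (shift_base (s i))"
  have R: "block_resolvent s l x (prod_encode (i,j))
      = (\<Sum>k\<le>j. a ^ ((2*(j-k)+k)*k) / l^(k+1) * x (prod_encode (i, j-k)))" for j
    by (simp add: block_resolvent_prod_encode a_def)
  show "shift_op l (block_shift s) (block_resolvent s l x) (prod_encode (i,j)) = x (prod_encode (i,j))"
  proof (cases j)
    case 0
    then show ?thesis using l by (simp add: shift_op_def block_shift_prod_encode R)
  next
    case (Suc m)
    have "l * block_resolvent s l x (prod_encode (i,j))
        = (\<Sum>k\<le>Suc m. a ^ ((2*(Suc m-k)+k)*k) / l^k * x (prod_encode (i, Suc m-k)))"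
      using Suc l by (simp add: R sum_distrib_left field_simps)
    also have "\<dots> = x (prod_encode (i, Suc m))
        + (\<Sum>k\<le>m. a ^ ((2*(Suc m-Suc k)+Suc k)*Suc k) / l^Suc k * x (prod_encode (i, m-k)))"
      by (subst sum.atMost_Suc_shift) simp
    also have "(\<Sum>k\<le>m. a ^ ((2*(Suc m-Suc k)+Suc k)*Suc k) / l^Suc k * x (prod_encode (i, m-k)))
       = a^(2*m+1) * (\<Sum>k\<le>m. a ^ ((2*(m-k)+k)*k) / l^(k+1) * x (prod_encode (i, m-k)))"
      unfolding sum_distrib_left
    proof (intro sum.cong refl)
      fix k assume "k \<in> {..m}"
      then have e: "(2*(Suc m-Suc k)+Suc k)*Suc k = (2*m+1) + (2*(m-k)+k)*k"
        by (auto simp: algebra_simps dest!: le_Suc_ex)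
      show "a ^ ((2*(Suc m-Suc k)+Suc k)*Suc k) / l^Suc k * x (prod_encode (i, m-k))
          = a^(2*m+1) * (a ^ ((2*(m-k)+k)*k) / l^(k+1) * x (prod_encode (i, m-k)))"
        unfolding e power_add by (simp add: mult_ac)
    qed
    also have "\<dots> = block_shift s (block_resolvent s l x) (prod_encode (i,j))"
      using Suc by (simp add: block_shift_prod_encode R a_def)
    finally show ?thesis using Suc by (simp add: shift_op_def)
  qed
qed

lemma shift_op_block_shift_inj:
  assumes l: "l \<noteq> 0" and eq: "shift_op l (block_shift s) y = shift_op l (block_shift s) z"
  shows "y = z"
proof (rule fun_eq_prod_encodeI)
  fix i j
  have coord: "shift_op l (block_shift s) y (prod_encode (i,j)) = shift_op l (block_shift s) z (prod_encode (i,j))"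
    for j using eq by simp
  show "y (prod_encode (i,j)) = z (prod_encode (i,j))"
  proof (induction j)
    case 0
    show ?case using coord[of 0] l by (simp add: shift_op_def block_shift_prod_encode)
  next
    case (Suc j)
    show ?case using coord[of "Suc j"] Suc l by (simp add: shift_op_def block_shift_prod_encode)
  qed
qed

section \<open>Growth of the resolvent\<close>

definition support_blocks :: "(nat \<Rightarrow> complex) \<Rightarrow> nat set" where
  "support_blocks x = {i. \<exists>j. x (prod_encode (i,j)) \<noteq> 0}"

text \<open>Completing the square: k ln y - k^2/t \<le> t (ln y)^2 / 4.\<close>
lemma pow_mult_shift_base_pow_le:
  assumes t: "0 \<le> t" and y: "0 < y"
  shows "y^k * shift_base t ^ (k*k) \<le> exp (t * (ln y)^2 / 4)"
proof (cases "t = 0")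
  case True
  then show ?thesis by (cases k) (auto simp: shift_base_def)
next
  case False
  have "real k * ln y - real k * real k / t \<le> t * (ln y)^2 / 4"
  proof -
    have "0 \<le> (t * ln y / 2 - real k)^2" by simp
    then have "t * (real k * ln y) - real k * real k \<le> t * (t * (ln y)^2 / 4)"
      by (simp add: power2_eq_square algebra_simps)
    then show ?thesis using t False by (simp add: field_simps)
  qed
  moreover have "y^k = exp (real k * ln y)" using y by (simp add: exp_of_nat_mult)
  moreover have "shift_base t ^ (k*k) = exp (- (real k * real k) / t)"
    using False by (simp add: shift_base_def exp_of_nat_mult[symmetric] field_simps)
  ultimately show ?thesis by (simp flip: exp_add)
qed

lemma l2norm_block_resolvent_le:
  assumes l: "l \<noteq> 0" and x: "x \<in> l2" and s: "\<forall>i. 0 \<le> s i"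
    and S: "\<forall>i\<in>support_blocks x. s i \<le> S"
  shows "block_resolvent s l x \<in> l2 \<and>
    l2norm (block_resolvent s l x) \<le> 2 * (1 / cmod l) * exp (S * (ln (2 / cmod l))^2 / 4) * l2norm x"
proof -
  define r where "r = 1 / cmod l"
  have r0: "0 < r" using l by (simp add: r_def)
  define E where "E = exp (S * (ln (2*r))^2 / 4)"
  define c where "c k = r * E * (1/2)^k" for k :: nat
  have c: "summable c" unfolding c_def by (intro summable_mult summable_geometric) simp
  have csum: "suminf c = 2 * r * E"
    unfolding c_def using suminf_geometric[of "1/2::real"] by (subst suminf_mult) simp_all
  have c0: "0 \<le> c k" for k using r0 by (simp add: c_def E_def)
  have term_le: "cmod (complex_of_real (shift_base (s i) ^ ((2*(j-k)+k)*k)) / l^(k+1) * x (prod_encode (i, j-k)))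
      \<le> c k * cmod (x (prod_encode (i, j-k)))" for i j k
  proof (cases "x (prod_encode (i, j-k)) = 0")
    case False
    then have si: "s i \<le> S" using S by (auto simp: support_blocks_def)
    define a where "a = shift_base (s i)"
    have a: "0 \<le> a" "a \<le> 1" using shift_base_nonneg shift_base_le_one s by (auto simp: a_def)
    have "r^(k+1) * a ^ ((2*(j-k)+k)*k) \<le> r^(k+1) * a ^ (k*k)"
      using a r0 by (intro mult_left_mono power_decreasing) auto
    also have "\<dots> = r * (1/2)^k * ((2*r)^k * a ^ (k*k))"
      by (simp add: field_simps)
    also have "\<dots> \<le> r * (1/2)^k * exp (s i * (ln (2*r))^2 / 4)"
      unfolding a_def using pow_mult_shift_base_pow_le[of "s i" "2*r" k] s r0
      by (intro mult_left_mono) auto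
    also have "\<dots> \<le> c k"
      unfolding c_def E_def using si r0
      by (auto intro!: mult_left_mono mult_right_mono divide_right_mono simp: mult_ac)
    finally have "r^(k+1) * a ^ ((2*(j-k)+k)*k) \<le> c k" .
    moreover have "cmod (complex_of_real (a ^ ((2*(j-k)+k)*k)) / l^(k+1) * x (prod_encode (i, j-k)))
        = r^(k+1) * a ^ ((2*(j-k)+k)*k) * cmod (x (prod_encode (i, j-k)))"
      using a by (simp add: norm_mult norm_divide norm_power r_def field_simps)
    ultimately show ?thesis by (simp add: a_def mult_right_mono)
  qed simp
  have "cmod (block_resolvent s l x (prod_encode (i,j))) \<le> (\<Sum>k\<le>j. c k * cmod (x (prod_encode (i, j-k))))"
    for i j
    unfolding block_resolvent_prod_encode by (rule order_trans[OF norm_sum sum_mono[OF term_le]])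
  then show ?thesis
    using l2_block_convolution[OF x c0 c] csum by (simp add: r_def E_def)
qed

lemma l2norm_block_resolvent_le_uniform:
  assumes "l \<noteq> 0" "x \<in> l2" "\<forall>i. 0 \<le> s i \<and> s i \<le> 1"
  shows "block_resolvent s l x \<in> l2 \<and>
    l2norm (block_resolvent s l x) \<le> 2 * (1 / cmod l) * exp ((ln (2 / cmod l))^2 / 4) * l2norm x"
  using l2norm_block_resolvent_le[of l x s 1] assms by simp

lemma block_resolvent_bounded:
  assumes "l \<noteq> 0" "\<forall>i. 0 \<le> s i \<and> s i \<le> 1"
  shows "bounded_op (block_resolvent s l)"
  unfolding bounded_op_def
proof (intro conjI ballI allI exI)
  fix x y :: "nat \<Rightarrow> complex" and c :: complex
  show "block_resolvent s l (\<lambda>n. x n + y n) = (\<lambda>n. block_resolvent s l x n + block_resolvent s l y n)"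
    by (rule fun_eq_prod_encodeI) (simp add: block_resolvent_prod_encode distrib_left sum.distrib)
  show "block_resolvent s l (\<lambda>n. c * x n) = (\<lambda>n. c * block_resolvent s l x n)"
    by (rule fun_eq_prod_encodeI) (simp add: block_resolvent_prod_encode sum_distrib_left mult_ac)
next
  fix x assume "x \<in> l2"
  note bound = l2norm_block_resolvent_le_uniform[OF assms(1) this assms(2)]
  then show "block_resolvent s l x \<in> l2" by simp
  from bound show "l2norm (block_resolvent s l x)
      \<le> (2 * (1 / cmod l) * exp ((ln (2 / cmod l))^2 / 4)) * l2norm x" by simp
qed

lemma block_shift_quasinilpotent:
  assumes s: "\<forall>i. 0 \<le> s i \<and> s i \<le> 1"
  shows "quasinilpotent (block_shift s)"
proof -
  have "invertible_op (shift_op l (block_shift s))" if "l \<noteq> 0" for l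
    unfolding invertible_op_def
    using block_resolvent_bounded[OF that s] shift_op_block_resolvent[OF that]
      shift_op_block_shift_inj[OF that] by metis
  moreover have "\<not> invertible_op (shift_op 0 (block_shift s))"
  proof
    define e :: "nat \<Rightarrow> complex" where "e n = (if n = prod_encode (0,0) then (1/2)^n else 0)" for n
    have "e \<in> l2" unfolding e_def by (rule geometric_restrict_in_l2)
    moreover assume "invertible_op (shift_op 0 (block_shift s))"
    ultimately obtain y where "shift_op 0 (block_shift s) y = e" unfolding invertible_op_def by blast
    then have "shift_op 0 (block_shift s) y (prod_encode (0,0)) = 1" by (simp add: e_def prod_encode_def)
    then show False by (simp add: shift_op_def block_shift_prod_encode)
  qed
  ultimately show ?thesis unfolding quasinilpotent_def op_spectrum_def by auto
qed

lemma resolvent_block_shift: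
  assumes l: "l \<noteq> 0" and s: "\<forall>i. 0 \<le> s i \<and> s i \<le> 1" and x: "x \<in> l2"
  shows "resolvent (block_shift s) l x = block_resolvent s l x"
  unfolding resolvent_def
proof (rule the_equality)
  show "block_resolvent s l x \<in> l2 \<and> shift_op l (block_shift s) (block_resolvent s l x) = x"
    using l2norm_block_resolvent_le_uniform[OF l x s] shift_op_block_resolvent[OF l] by blast
  show "y = block_resolvent s l x" if "y \<in> l2 \<and> shift_op l (block_shift s) y = x" for y
    using that shift_op_block_resolvent[OF l, of s x] shift_op_block_shift_inj[OF l] by metis
qed

lemma opnorm_resolvent_block_shift:
  assumes "l \<noteq> 0" "\<forall>i. 0 \<le> s i \<and> s i \<le> 1"
  shows "opnorm (resolvent (block_shift s) l) = opnorm (block_resolvent s l)"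
  unfolding opnorm_def using resolvent_block_shift[OF assms] by metis

lemma opnorm_block_resolvent_le:
  assumes l: "l \<noteq> 0" and s: "\<forall>i. 0 \<le> s i \<and> s i \<le> 1"
  shows "opnorm (block_resolvent s l) \<le> 2 * (1 / cmod l) * exp ((ln (2 / cmod l))^2 / 4)"
    and "bdd_above {l2norm (block_resolvent s l x) | x. x \<in> l2 \<and> l2norm x \<le> 1}"
proof -
  define B where "B = 2 * (1 / cmod l) * exp ((ln (2 / cmod l))^2 / 4)"
  have le: "l2norm (block_resolvent s l x) \<le> B" if "x \<in> l2" "l2norm x \<le> 1" for x
  proof -
    have "l2norm (block_resolvent s l x) \<le> B * l2norm x"
      using l2norm_block_resolvent_le_uniform[OF l that(1) s] unfolding B_def by simp
    also have "\<dots> \<le> B" using that by (intro mult_left_le) (auto simp: B_def)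
    finally show ?thesis .
  qed
  then show "bdd_above {l2norm (block_resolvent s l x) | x. x \<in> l2 \<and> l2norm x \<le> 1}"
    by (auto intro!: bdd_aboveI[of _ B])
  have "{l2norm (block_resolvent s l x) | x. x \<in> l2 \<and> l2norm x \<le> 1} \<noteq> {}"
    using zero_in_l2 l2norm_zero by force
  then show "opnorm (block_resolvent s l) \<le> B"
    unfolding opnorm_def using le by (auto intro!: cSup_least)
qed

text \<open>The Cauchy inequality at the centre of the disc.\<close>
lemma norm_const_coeff_le_on_circle:
  fixes b :: "nat \<Rightarrow> complex"
  assumes "0 < \<rho>"
  obtains z where "cmod z = \<rho>" "cmod (b k) \<le> cmod (\<Sum>t\<le>k. b t * z^(k-t))"
proof -
  define p where "p z = (\<Sum>t\<le>k. b t * z^(k-t))" for z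
  have "\<exists>z\<in>sphere 0 \<rho>. \<forall>w\<in>sphere 0 \<rho>. cmod (p w) \<le> cmod (p z)"
    using assms unfolding p_def by (intro continuous_attains_sup continuous_intros) auto
  then obtain z where z: "z \<in> sphere 0 \<rho>" "\<And>w. w \<in> sphere 0 \<rho> \<Longrightarrow> cmod (p w) \<le> cmod (p z)"
    by blast
  have hol: "p holomorphic_on UNIV" unfolding p_def[abs_def] by (intro holomorphic_intros)
  have "cmod ((deriv ^^ 0) p 0) \<le> fact 0 * cmod (p z) / \<rho>^0"
    using assms z holomorphic_on_subset[OF hol] holomorphic_on_imp_continuous_on[OF hol]
    by (intro Cauchy_inequality) (auto intro: continuous_on_subset)
  moreover have "p 0 = b k"
    unfolding p_def by (subst sum.remove[of _ k]) (auto intro!: sum.neutral)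
  ultimately show ?thesis using that[of z] z(1) by (simp add: p_def)
qed

lemma square_le_floor_completion:
  fixes u :: real assumes "0 \<le> u"
  shows "u^2 - 1 \<le> 2 * u * real (nat \<lfloor>u\<rfloor>) - (real (nat \<lfloor>u\<rfloor>))^2"
proof -
  define k where "k = real (nat \<lfloor>u\<rfloor>)"
  have "k \<le> u" "u < k + 1" using assms unfolding k_def by linarith+
  then have "(u - k)^2 \<le> 1" by (intro power_le_one) auto
  then show ?thesis unfolding k_def[symmetric] by (simp add: power2_eq_square algebra_simps)
qed

text \<open>Completing the square once more, now with the integer k nearest below the optimum.\<close>
lemma ln_peak_ge:
  assumes \<sigma>: "0 < \<sigma>" and c: "0 < c" and L: "2 * real m \<le> \<sigma> * L"
  defines "k \<equiv> nat \<lfloor>(\<sigma> * L - 2 * real m) / 2\<rfloor>"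
  shows "ln c + L + \<sigma> * L^2/4 - real m * L + ((real m)^2 - 1) / \<sigma>
    \<le> ln (c * shift_base \<sigma> ^ ((2*m+k)*k) * (1/exp (-L))^(k+1))"
proof -
  define M where "M = real m"
  define K where "K = real k"
  define v where "v = (\<sigma>*L - 2*M)/2"
  have "v^2 - 1 \<le> 2 * v * K - K^2"
    unfolding K_def k_def v_def M_def using L by (intro square_le_floor_completion) simp
  then have "0 \<le> ((2 * v * K - K^2) - (v^2 - 1)) / \<sigma>" using \<sigma> by simp
  also have "\<dots> = (- ((2*M + K) * K) / \<sigma> + (K + 1) * L) - (L + \<sigma>*L^2/4 - M*L + (M^2 - 1)/\<sigma>)"
    using \<sigma> unfolding v_def by (simp add: field_simps power2_eq_square)
  finally have "ln c + L + \<sigma>*L^2/4 - M*L + (M^2 - 1)/\<sigma> \<le> ln c + (- ((2*M + K) * K) / \<sigma> + (K + 1) * L)"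
    by linarith
  also have "\<dots> = ln (c * exp (- ((2*M + K) * K) / \<sigma>) * exp ((K + 1) * L))"
    using c by (simp add: ln_mult_pos)
  also have "exp (- ((2*M + K) * K) / \<sigma>) = exp (-1/\<sigma>) ^ ((2*m+k)*k)"
    unfolding exp_of_nat_mult[symmetric] by (simp add: M_def K_def)
  also have "exp (-1/\<sigma>) = shift_base \<sigma>" using \<sigma> by (simp add: shift_base_def)
  also have "exp ((K + 1) * L) = (1/exp (-L))^(k+1)"
    unfolding exp_minus inverse_eq_divide
    by (simp add: K_def exp_of_nat_mult[symmetric] exp_add algebra_simps)
  finally show ?thesis by (simp add: M_def)
qed

text \<open>Test the resolvent on e_(i1,0) in the coordinate k = floor (L/2) where r^(k+1) exp(-k^2) peaks.\<close>
lemma opnorm_block_resolvent_ge: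
  assumes s: "\<forall>i. 0 \<le> s i \<and> s i \<le> 1" and i1: "s i1 = 1" and l: "l \<noteq> 0" "cmod l \<le> 1"
  shows "(1 / cmod l) * exp ((ln (1 / cmod l))^2 / 4 - 1) \<le> opnorm (block_resolvent s l)"
proof -
  define e :: "nat \<Rightarrow> complex" where "e n = (if n = prod_encode (i1,0) then 1 else 0)" for n
  have e_sq: "(\<lambda>n. (cmod (e n))^2) = (\<lambda>n. if n = prod_encode (i1,0) then 1 else 0)"
    by (auto simp: e_def)
  have "e \<in> l2" unfolding l2_def mem_Collect_eq e_sq
    by (rule summable_finite[of "{prod_encode (i1,0)}"]) auto
  moreover have "l2norm e = 1" unfolding l2norm_def e_sq
    by (subst suminf_finite[of "{prod_encode (i1,0)}"]) auto
  ultimately have e: "e \<in> l2" "l2norm e = 1" .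
  define r where "r = 1 / cmod l"
  have r1: "1 \<le> r" using l by (simp add: r_def field_simps)
  define L where "L = ln r"
  have L0: "0 \<le> L" using r1 by (simp add: L_def)
  define k where "k = nat \<lfloor>L/2\<rfloor>"
  have "block_resolvent s l e (prod_encode (i1,k)) = complex_of_real (exp (-1) ^ (k*k)) / l^(k+1)"
    unfolding block_resolvent_prod_encode i1 shift_base_one
    by (subst sum.remove[of _ k]) (auto simp: e_def intro!: sum.neutral)
  then have "cmod (block_resolvent s l e (prod_encode (i1,k))) = exp (-1) ^ (k*k) * r^(k+1)"
    by (simp add: norm_divide norm_mult norm_power r_def field_simps)
  also have "\<dots> = r * exp (real k * L - (real k)^2)"
  proof -
    have "exp (-1) ^ (k*k) = exp (- ((real k)^2))"
      by (simp add: exp_of_nat_mult[symmetric] power2_eq_square)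
    moreover have "r^k = exp (real k * L)" using r1 by (simp add: L_def exp_of_nat_mult)
    ultimately show ?thesis by (simp add: exp_diff exp_minus field_simps)
  qed
  finally have "cmod (block_resolvent s l e (prod_encode (i1,k))) = r * exp (real k * L - (real k)^2)" .
  moreover have "r * exp (L^2/4 - 1) \<le> r * exp (real k * L - (real k)^2)"
    using square_le_floor_completion[of "L/2"] L0 r1 unfolding k_def
    by (intro mult_left_mono) (auto simp: power2_eq_square field_simps)
  moreover have "cmod (block_resolvent s l e (prod_encode (i1,k))) \<le> l2norm (block_resolvent s l e)"
    using l2norm_block_resolvent_le_uniform[OF l(1) e(1) s] by (intro norm_le_l2norm) simp
  moreover have "l2norm (block_resolvent s l e) \<le> opnorm (block_resolvent s l)"
    unfolding opnorm_def using e opnorm_block_resolvent_le(2)[OF l(1) s] by (intro cSup_upper) auto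
  ultimately show ?thesis by (simp add: r_def L_def)
qed

lemma block_resolvent_first_nonzero:
  assumes "\<forall>j<m. x (prod_encode (i,j)) = 0"
  shows "block_resolvent s l x (prod_encode (i,m)) = x (prod_encode (i,m)) / l"
  unfolding block_resolvent_prod_encode using assms
  by (subst sum.remove[of _ 0]) (auto intro!: sum.neutral)

text \<open>As x vanishes below position m of block i, l^(k+1) times the coordinate m + k of the resolvent
  is a polynomial in l with constant term a^((2m+k)k) x_(i,m).\<close>
lemma block_resolvent_coord_ge:
  assumes zero: "\<forall>j<m. x (prod_encode (i,j)) = 0" and \<rho>: "0 < \<rho>"
  obtains l where "cmod l = \<rho>"
    "cmod (x (prod_encode (i,m))) * shift_base (s i) ^ ((2*m+k)*k) * (1/\<rho>)^(k+1)
       \<le> cmod (block_resolvent s l x (prod_encode (i, m+k)))"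
proof -
  define b where "b t = complex_of_real (shift_base (s i) ^ ((2*(m+k-t)+t)*t)) * x (prod_encode (i, m+k-t))"
    for t
  obtain z where z: "cmod z = \<rho>" "cmod (b k) \<le> cmod (\<Sum>t\<le>k. b t * z^(k-t))"
    using norm_const_coeff_le_on_circle[OF \<rho>] by blast
  have z0: "z \<noteq> 0" using z \<rho> by auto
  have "block_resolvent s z x (prod_encode (i, m+k))
      = (\<Sum>t\<le>k. complex_of_real (shift_base (s i) ^ ((2*(m+k-t)+t)*t)) / z^(t+1) * x (prod_encode (i, m+k-t)))"
    unfolding block_resolvent_prod_encode
  proof (rule sum.mono_neutral_right)
    have "x (prod_encode (i, m+k-t)) = 0" if "k < t" "t \<le> m+k" for t
    proof -
      have "m+k-t < m" using that by arith
      then show ?thesis using zero by simp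
    qed
    then show "\<forall>t\<in>{..m+k} - {..k}. complex_of_real (shift_base (s i) ^ ((2*(m+k-t)+t)*t)) / z^(t+1)
        * x (prod_encode (i, m+k-t)) = 0" by auto
  qed auto
  also have "\<dots> = (\<Sum>t\<le>k. b t * z^(k-t)) / z^(k+1)"
    unfolding sum_divide_distrib
  proof (intro sum.cong refl)
    fix t assume "t \<in> {..k}"
    then have "z^(k+1) = z^(k-t) * z^(t+1)" by (simp flip: power_add)
    then show "complex_of_real (shift_base (s i) ^ ((2*(m+k-t)+t)*t)) / z^(t+1) * x (prod_encode (i, m+k-t))
        = b t * z^(k-t) / z^(k+1)"
      using z0 by (simp add: b_def field_simps)
  qed
  finally have "cmod (block_resolvent s z x (prod_encode (i, m+k))) = cmod (\<Sum>t\<le>k. b t * z^(k-t)) / \<rho>^(k+1)"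
    using z(1) by (simp add: norm_divide norm_mult norm_power)
  moreover have "cmod (b k) = shift_base (s i) ^ ((2*m+k)*k) * cmod (x (prod_encode (i,m)))"
    by (simp add: b_def norm_mult norm_power shift_base_nonneg)
  ultimately show ?thesis
    using that[of z] z \<rho> by (simp add: power_one_over divide_right_mono mult.commute)
qed

section \<open>Upper limits at the origin\<close>

lemma filterlim_ln_inverse_norm_at_0: "filterlim (\<lambda>l::complex. ln (1 / cmod l)) at_top (at 0)"
proof -
  have "filterlim (\<lambda>l::complex. inverse (cmod l)) at_top (at 0)"
    by (intro filterlim_inverse_at_top tendsto_norm_zero tendsto_ident_at)
      (auto simp: eventually_at_filter)
  then show ?thesis
    unfolding inverse_eq_divide by (rule filterlim_compose[OF ln_at_top])
qed

lemma one_le_ln_inverse_normD: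
  assumes "1 \<le> ln (1 / cmod l)" shows "l \<noteq> 0" "cmod l \<le> 1"
proof -
  show "l \<noteq> 0" using assms by auto
  then have "0 \<le> ln (1 / cmod l)" using assms by linarith
  then show "cmod l \<le> 1" using \<open>l \<noteq> 0\<close> by (simp add: ln_div)
qed

lemma Limsup_mono_filter: "F \<le> G \<Longrightarrow> Limsup F f \<le> Limsup G f"
  unfolding Limsup_def le_filter_def by (rule INF_superset_mono) auto

lemma Limsup_at_0_le_of_tendsto:
  fixes u :: "real \<Rightarrow> real" and f :: "complex \<Rightarrow> real"
  assumes u: "(u \<longlongrightarrow> c) at_top" and f: "\<forall>\<^sub>F l in at 0. f l \<le> u (ln (1 / cmod l))"
  shows "Limsup (at 0) (\<lambda>l. ereal (f l)) \<le> ereal c"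
proof -
  have "((\<lambda>l. ereal (u (ln (1 / cmod l)))) \<longlongrightarrow> ereal c) (at (0::complex))"
    using filterlim_compose[OF u filterlim_ln_inverse_norm_at_0] by (rule tendsto_ereal)
  then have "Limsup (at 0) (\<lambda>l. ereal (u (ln (1 / cmod l)))) = ereal c"
    by (intro lim_imp_Limsup) auto
  moreover have "Limsup (at 0) (\<lambda>l. ereal (f l)) \<le> Limsup (at 0) (\<lambda>l. ereal (u (ln (1 / cmod l))))"
    using f by (intro Limsup_mono) (simp add: eventually_mono)
  ultimately show ?thesis by simp
qed

lemma tendsto_le_Limsup_at_0:
  fixes w :: "real \<Rightarrow> real" and f :: "complex \<Rightarrow> real"
  assumes w: "(w \<longlongrightarrow> c) at_top" and f: "\<forall>\<^sub>F L in at_top. \<exists>l. cmod l = exp (-L) \<and> w L \<le> f l"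
  shows "ereal c \<le> Limsup (at 0) (\<lambda>l. ereal (f l))"
proof -
  define g where "g L = (SOME l. cmod l = exp (-L) \<and> w L \<le> f l)" for L
  have g: "\<forall>\<^sub>F L in at_top. cmod (g L) = exp (-L) \<and> w L \<le> f (g L)"
    using f by eventually_elim (unfold g_def, rule someI_ex)
  have "filterlim g (at 0) at_top"
  proof (rule filterlim_atI)
    have "((\<lambda>L::real. exp (-L)) \<longlongrightarrow> 0) at_top" by real_asymp
    then have "((\<lambda>L. cmod (g L)) \<longlongrightarrow> 0) at_top"
      by (rule Lim_transform_eventually) (use g in \<open>auto elim: eventually_mono\<close>)
    then show "(g \<longlongrightarrow> 0) at_top" by (rule tendsto_norm_zero_cancel)
    show "\<forall>\<^sub>F L in at_top. g L \<noteq> 0" using g by eventually_elim auto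
  qed
  have "ereal c = Limsup at_top (\<lambda>L. ereal (w L))"
    using w by (intro lim_imp_Limsup[symmetric] tendsto_ereal) auto
  also have "\<dots> \<le> Limsup at_top (\<lambda>L. ereal (f (g L)))"
    using g by (intro Limsup_mono) (simp add: eventually_mono)
  also have "\<dots> \<le> Limsup (filtermap g at_top) (\<lambda>l. ereal (f l))"
    by (rule Limsup_filtermap_ge)
  also have "\<dots> \<le> Limsup (at 0) (\<lambda>l. ereal (f l))"
    using \<open>filterlim g (at 0) at_top\<close> unfolding filterlim_def by (rule Limsup_mono_filter)
  finally show ?thesis .
qed

section \<open>Local powers of the direct sum\<close>

lemma l2norm_block_resolvent_ge:
  assumes l: "l \<noteq> 0" and s: "\<forall>i. 0 \<le> s i \<and> s i \<le> 1" and x: "x \<in> l2"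
    and zero: "\<forall>j<m. x (prod_encode (i,j)) = 0"
  shows "cmod (x (prod_encode (i,m))) / cmod l \<le> l2norm (block_resolvent s l x)"
  using norm_le_l2norm[of "block_resolvent s l x" "prod_encode (i,m)"]
    l2norm_block_resolvent_le_uniform[OF l x s] block_resolvent_first_nonzero[OF zero]
  by (simp add: norm_divide)

lemma right_closed_SupI: "right_closed X \<Longrightarrow> Y \<noteq> {} \<Longrightarrow> Y \<subseteq> X \<Longrightarrow> bdd_above Y \<Longrightarrow> Sup Y \<in> X"
  unfolding right_closed_def by blast

locale shift_labels =
  fixes s :: "nat \<Rightarrow> real"
  assumes labels: "\<forall>i. 0 \<le> s i \<and> s i \<le> 1" and top_label: "\<exists>i. s i = 1"
begin

definition log_ratio :: "complex \<Rightarrow> (nat \<Rightarrow> complex) \<Rightarrow> real" where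
  "log_ratio l x = ln (l2norm (block_resolvent s l x)) / ln (opnorm (block_resolvent s l))"

lemma local_power_eq_Limsup_log_ratio:
  assumes "x \<in> l2"
  shows "local_power (block_shift s) x = Limsup (at 0) (\<lambda>l. ereal (log_ratio l x))"
  unfolding local_power_def
proof (rule Limsup_eq)
  show "\<forall>\<^sub>F l in at 0. ereal (ln (l2norm (resolvent (block_shift s) l x)) / ln (opnorm (resolvent (block_shift s) l)))
      = ereal (log_ratio l x)"
    using eventually_neq_at_within[of 0 0] by (rule eventually_mono)
      (use assms in \<open>simp add: log_ratio_def resolvent_block_shift[OF _ labels]
        opnorm_resolvent_block_shift[OF _ labels]\<close>)
qed

lemma ln_opnorm_block_resolvent_bounds:
  assumes L: "1 \<le> ln (1 / cmod l)"
  defines "L \<equiv> ln (1 / cmod l)"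
  shows "L + L^2/4 - 1 \<le> ln (opnorm (block_resolvent s l))"
    and "ln (opnorm (block_resolvent s l)) \<le> ln 2 + L + (L + ln 2)^2/4"
    and "0 < ln (opnorm (block_resolvent s l))"
proof -
  note l = one_le_ln_inverse_normD[OF L]
  obtain i1 where i1: "s i1 = 1" using top_label by blast
  define r where "r = 1 / cmod l"
  have r0: "0 < r" using l by (simp add: r_def)
  have lower: "r * exp (L^2/4 - 1) \<le> opnorm (block_resolvent s l)"
    using opnorm_block_resolvent_ge[OF labels i1 l] by (simp add: r_def L_def)
  have "0 < r * exp (L^2/4 - 1)" using r0 by simp
  moreover have "ln (r * exp (L^2/4 - 1)) = L + L^2/4 - 1"
    using ln_mult_pos[OF r0 exp_gt_zero, of "L^2/4 - 1"] by (simp add: L_def r_def)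
  ultimately show lo: "L + L^2/4 - 1 \<le> ln (opnorm (block_resolvent s l))"
    using lower by (metis ln_le_cancel_iff order_less_le_trans)
  have "ln (opnorm (block_resolvent s l)) \<le> ln (2 * r * exp ((ln (2 * r))^2 / 4))"
    using lower \<open>0 < r * exp (L^2/4 - 1)\<close> opnorm_block_resolvent_le(1)[OF l(1) labels]
    by (subst ln_le_cancel_iff) (auto simp: r_def)
  also have "\<dots> = ln 2 + ln r + (ln 2 + ln r)^2/4" using r0 by (simp add: ln_mult_pos)
  also have "\<dots> = ln 2 + L + (L + ln 2)^2/4" by (simp add: r_def L_def add.commute)
  finally show "ln (opnorm (block_resolvent s l)) \<le> ln 2 + L + (L + ln 2)^2/4" .
  have "0 < L + L^2/4 - 1" using L one_le_power[of L 2] unfolding L_def[symmetric] by linarith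
  then show "0 < ln (opnorm (block_resolvent s l))" using lo by linarith
qed

lemma log_ratio_le:
  fixes l :: complex
  defines "L \<equiv> ln (1 / cmod l)"
  assumes x: "x \<in> l2" "x \<noteq> (\<lambda>n. 0)" and S: "0 \<le> S" "\<forall>i\<in>support_blocks x. s i \<le> S"
    and L: "1 \<le> L" "- ln (l2norm x) - ln 2 \<le> L"
  shows "log_ratio l x \<le> (ln 2 + L + S*(L + ln 2)^2/4 + ln (l2norm x)) / (L + L^2/4 - 1)"
proof -
  obtain i m where m: "x (prod_encode (i,m)) \<noteq> 0" "\<forall>j<m. x (prod_encode (i,j)) = 0"
    using x(2) by (metis ex_prod_encode_nonzero first_nonzero_in_block)
  have x0: "0 < l2norm x" using x(1) m(1) by (rule l2norm_pos)
  note l = one_le_ln_inverse_normD[OF L(1)[unfolded L_def]]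
  have "0 < cmod (x (prod_encode (i,m))) / cmod l" using m(1) l(1) by simp
  also have "\<dots> \<le> l2norm (block_resolvent s l x)"
    using l2norm_block_resolvent_ge[OF l(1) labels x(1) m(2)] .
  finally have "ln (l2norm (block_resolvent s l x))
      \<le> ln (2 * (1 / cmod l) * exp (S * (ln (2 / cmod l))^2 / 4) * l2norm x)"
    using l2norm_block_resolvent_le[OF l(1) x(1) _ S(2)] labels l(1) x0
    by (subst ln_le_cancel_iff) auto
  also have "\<dots> = ln 2 + L + S*(L + ln 2)^2/4 + ln (l2norm x)"
    using l x0 by (simp add: ln_mult ln_div L_def)
  finally have num: "ln (l2norm (block_resolvent s l x)) \<le> ln 2 + L + S*(L + ln 2)^2/4 + ln (l2norm x)" .
  have den: "L + L^2/4 - 1 \<le> ln (opnorm (block_resolvent s l))"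
    using ln_opnorm_block_resolvent_bounds(1) L(1) unfolding L_def by blast
  have "0 < L + L^2/4 - 1" using L one_le_power[of L 2] by linarith
  moreover have "0 \<le> ln 2 + L + S*(L + ln 2)^2/4 + ln (l2norm x)"
    using L S(1) zero_le_power2[of "L + ln 2"] by (smt (verit) divide_nonneg_pos mult_nonneg_nonneg)
  ultimately show ?thesis unfolding log_ratio_def using num den by (intro frac_le) auto
qed

lemma Limsup_log_ratio_le:
  assumes x: "x \<in> l2" "x \<noteq> (\<lambda>n. 0)" and S: "0 \<le> S" "\<forall>i\<in>support_blocks x. s i \<le> S"
  shows "Limsup (at 0) (\<lambda>l. ereal (log_ratio l x)) \<le> ereal S"
proof -
  define c where "c = ln (l2norm x)"
  define u where "u L = (ln 2 + L + S*(L + ln 2)^2/4 + c) / (L + L^2/4 - 1)" for L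
  have "(u \<longlongrightarrow> S) at_top" using S unfolding u_def by real_asymp
  moreover have "\<forall>\<^sub>F l in at 0. log_ratio l x \<le> u (ln (1 / cmod l))"
    using eventually_compose_filterlim[OF eventually_ge_at_top[of "max 1 (- c - ln 2)"]
        filterlim_ln_inverse_norm_at_0]
    by eventually_elim (use log_ratio_le[OF x S] in \<open>simp add: u_def c_def\<close>)
  ultimately show ?thesis by (rule Limsup_at_0_le_of_tendsto)
qed

text \<open>Test x against the resolvent at radius exp(-L) in coordinate m + k of block i, with
  k \<approx> (s i L - 2m)/2 where the Neumann coefficients peak.\<close>
lemma log_ratio_ge_on_circle:
  assumes x: "x \<in> l2" and nz: "x (prod_encode (i,m)) \<noteq> 0" and zero: "\<forall>j<m. x (prod_encode (i,j)) = 0"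
    and pos: "0 < s i" and L: "1 \<le> L" "2 * real m \<le> s i * L"
  defines "N \<equiv> ln (cmod (x (prod_encode (i,m)))) + L + s i * L^2/4 - real m * L + ((real m)^2 - 1) / s i"
  assumes N: "0 \<le> N"
  obtains l where "cmod l = exp (-L)" "N / (ln 2 + L + (L + ln 2)^2/4) \<le> log_ratio l x"
proof -
  define k where "k = nat \<lfloor>(s i * L - 2 * real m) / 2\<rfloor>"
  define peak where "peak = cmod (x (prod_encode (i,m))) * shift_base (s i) ^ ((2*m+k)*k) * (1/exp (-L))^(k+1)"
  obtain l where l: "cmod l = exp (-L)"
    and peak: "peak \<le> cmod (block_resolvent s l x (prod_encode (i, m+k)))"
    unfolding peak_def using block_resolvent_coord_ge[OF zero exp_gt_zero] by blast
  have "l \<noteq> 0" using l by auto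
  note peak
  also have "cmod (block_resolvent s l x (prod_encode (i, m+k))) \<le> l2norm (block_resolvent s l x)"
    using l2norm_block_resolvent_le_uniform[OF \<open>l \<noteq> 0\<close> x labels] by (intro norm_le_l2norm) simp
  finally have "peak \<le> l2norm (block_resolvent s l x)" .
  moreover have "0 < peak" using nz pos by (simp add: peak_def shift_base_def)
  ultimately have "ln peak \<le> ln (l2norm (block_resolvent s l x))" by simp
  moreover have "N \<le> ln peak"
    unfolding N_def peak_def k_def using ln_peak_ge[OF pos _ L(2)] nz by simp
  ultimately have num: "N \<le> ln (l2norm (block_resolvent s l x))" by linarith
  have Ll: "ln (1 / cmod l) = L" using l by (simp add: exp_minus inverse_eq_divide)
  then have "1 \<le> ln (1 / cmod l)" using L(1) by simp
  note bounds = ln_opnorm_block_resolvent_bounds[OF this, unfolded Ll]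
  have "N / (ln 2 + L + (L + ln 2)^2/4) \<le> log_ratio l x"
    unfolding log_ratio_def using N num bounds(2,3) by (intro frac_le) auto
  then show ?thesis using that l by blast
qed

lemma Limsup_log_ratio_ge:
  assumes x: "x \<in> l2" and i: "i \<in> support_blocks x" and pos: "0 < s i"
  shows "ereal (s i) \<le> Limsup (at 0) (\<lambda>l. ereal (log_ratio l x))"
proof -
  obtain m where m: "x (prod_encode (i,m)) \<noteq> 0" "\<forall>j<m. x (prod_encode (i,j)) = 0"
    using i unfolding support_blocks_def by (blast elim: first_nonzero_in_block)
  define c where "c = ln (cmod (x (prod_encode (i,m))))"
  define N where "N L = c + L + s i * L^2/4 - real m * L + ((real m)^2 - 1) / s i" for L
  define w where "w L = N L / (ln 2 + L + (L + ln 2)^2/4)" for L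
  have "(w \<longlongrightarrow> s i) at_top" using pos unfolding w_def N_def by real_asymp
  moreover have "\<forall>\<^sub>F L in at_top. \<exists>l. cmod l = exp (-L) \<and> w L \<le> log_ratio l x"
  proof -
    have "\<forall>\<^sub>F L in at_top. 1 \<le> (L::real)" by (rule eventually_ge_at_top)
    moreover have "\<forall>\<^sub>F L in at_top. 2 * real m \<le> s i * L" using pos by real_asymp
    moreover have "\<forall>\<^sub>F L in at_top. 0 \<le> N L" using pos unfolding N_def by real_asymp
    ultimately show ?thesis
    proof eventually_elim
      case (elim L)
      then show ?case
        using log_ratio_ge_on_circle[OF x m(1) m(2) pos, of L] unfolding w_def N_def c_def by blast
    qed
  qed
  ultimately show ?thesis by (rule tendsto_le_Limsup_at_0)
qed

lemma Limsup_log_ratio_nonneg: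
  assumes x: "x \<in> l2" "x \<noteq> (\<lambda>n. 0)"
  shows "0 \<le> Limsup (at 0) (\<lambda>l. ereal (log_ratio l x))"
proof (rule le_Limsup)
  obtain i m where m: "x (prod_encode (i,m)) \<noteq> 0" "\<forall>j<m. x (prod_encode (i,j)) = 0"
    using x(2) by (metis ex_prod_encode_nonzero first_nonzero_in_block)
  define c where "c = ln (cmod (x (prod_encode (i,m))))"
  show "\<forall>\<^sub>F l in at 0. 0 \<le> ereal (log_ratio l x)"
    using eventually_compose_filterlim[OF eventually_ge_at_top[of "max 1 (- c)"]
        filterlim_ln_inverse_norm_at_0]
  proof eventually_elim
    case (elim l)
    then have L: "1 \<le> ln (1 / cmod l)" "0 \<le> c + ln (1 / cmod l)" by auto
    note l = one_le_ln_inverse_normD[OF L(1)]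
    have "0 < cmod (x (prod_encode (i,m))) / cmod l" using m(1) l(1) by simp
    moreover have "cmod (x (prod_encode (i,m))) / cmod l \<le> l2norm (block_resolvent s l x)"
      using l2norm_block_resolvent_ge[OF l(1) labels x(1) m(2)] .
    ultimately have "ln (cmod (x (prod_encode (i,m))) / cmod l) \<le> ln (l2norm (block_resolvent s l x))"
      by simp
    moreover have "ln (cmod (x (prod_encode (i,m))) / cmod l) = c + ln (1 / cmod l)"
      using m(1) l(1) by (simp add: c_def ln_div)
    ultimately have "0 \<le> ln (l2norm (block_resolvent s l x))" using L(2) by linarith
    then show ?case
      using ln_opnorm_block_resolvent_bounds(3)[OF L(1)] by (simp add: log_ratio_def)
  qed
qed auto

lemma local_power_block_shift:
  assumes x: "x \<in> l2" "x \<noteq> (\<lambda>n. 0)"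
  shows "local_power (block_shift s) x = ereal (Sup (s ` support_blocks x))"
proof -
  define I where "I = support_blocks x"
  obtain i0 j0 where "x (prod_encode (i0,j0)) \<noteq> 0" using x(2) by (rule ex_prod_encode_nonzero)
  then have i0: "i0 \<in> I" by (auto simp: I_def support_blocks_def)
  have bdd: "bdd_above (s ` I)" using labels by (auto intro: bdd_aboveI[of _ 1])
  have upper: "\<forall>i\<in>I. s i \<le> Sup (s ` I)" using bdd by (auto intro: cSup_upper)
  have "0 \<le> Sup (s ` I)" using upper[rule_format, OF i0] labels[rule_format, of i0] by linarith
  then have "Limsup (at 0) (\<lambda>l. ereal (log_ratio l x)) \<le> ereal (Sup (s ` I))"
    using Limsup_log_ratio_le[OF x] upper by (simp add: I_def)
  moreover have "ereal (s i) \<le> Limsup (at 0) (\<lambda>l. ereal (log_ratio l x))" if "i \<in> I" for i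
  proof (cases "s i = 0")
    case True
    then show ?thesis using Limsup_log_ratio_nonneg[OF x] by (simp add: zero_ereal_def)
  next
    case False
    then have "0 < s i" using labels by (simp add: less_le)
    then show ?thesis using Limsup_log_ratio_ge[OF x(1)] that by (simp add: I_def)
  qed
  moreover have "ereal (Sup (s ` I)) = (SUP i\<in>I. ereal (s i))"
    using i0 labels by (intro ereal_SUP ereal_SUP_not_infty[of I 0 1]) auto
  ultimately show ?thesis
    using local_power_eq_Limsup_log_ratio[OF x(1)] by (simp add: I_def antisym SUP_least)
qed

lemma power_set_block_shift_subset:
  assumes "right_closed \<sigma>" "range s \<subseteq> \<sigma>"
  shows "power_set (block_shift s) \<subseteq> ereal ` \<sigma>"
proof
  fix k assume "k \<in> power_set (block_shift s)"
  then obtain x where x: "x \<in> l2" "x \<noteq> (\<lambda>n. 0)" and k: "k = local_power (block_shift s) x"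
    unfolding power_set_def by blast
  obtain i j where "x (prod_encode (i,j)) \<noteq> 0" using x(2) by (rule ex_prod_encode_nonzero)
  then have "s ` support_blocks x \<noteq> {}" unfolding support_blocks_def by blast
  moreover have "s ` support_blocks x \<subseteq> \<sigma>" using assms(2) by auto
  moreover have "bdd_above (s ` support_blocks x)" using labels by (auto intro: bdd_aboveI[of _ 1])
  ultimately have "Sup (s ` support_blocks x) \<in> \<sigma>" by (rule right_closed_SupI[OF assms(1)])
  then show "k \<in> ereal ` \<sigma>" using local_power_block_shift[OF x] k by simp
qed

lemma ereal_in_power_set_block_shift:
  assumes t: "\<forall>e>0. \<exists>i. t - e < s i \<and> s i \<le> t"
  shows "ereal t \<in> power_set (block_shift s)"
proof -
  define J where "J = {i. s i \<le> t}"
  define x :: "nat \<Rightarrow> complex"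
    where "x n = (if \<exists>i\<in>J. n = prod_encode (i,0) then (1/2)^n else 0)" for n
  have x: "x \<in> l2" unfolding x_def by (rule geometric_restrict_in_l2)
  have "x (prod_encode (i,j)) \<noteq> 0 \<longleftrightarrow> i \<in> J \<and> j = 0" for i j by (auto simp: x_def)
  then have support: "support_blocks x = J" unfolding support_blocks_def by blast
  obtain i0 where "s i0 \<le> t" using t[rule_format, of 1] by auto
  then have J: "i0 \<in> J" by (simp add: J_def)
  then have "x (prod_encode (i0,0)) \<noteq> 0" by (auto simp: x_def)
  then have x0: "x \<noteq> (\<lambda>n. 0)" by auto
  have bdd: "bdd_above (s ` J)" by (auto simp: J_def intro!: bdd_aboveI[of _ t])
  have "Sup (s ` J) = t"
  proof (rule antisym)
    show "Sup (s ` J) \<le> t" using J by (intro cSup_least) (auto simp: J_def)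
    show "t \<le> Sup (s ` J)"
    proof (rule field_le_epsilon)
      fix e :: real assume "0 < e"
      then obtain i where i: "t - e < s i" "s i \<le> t" using t by blast
      then have "s i \<le> Sup (s ` J)" using bdd by (intro cSup_upper) (auto simp: J_def)
      then show "t \<le> Sup (s ` J) + e" using i by linarith
    qed
  qed
  then have "local_power (block_shift s) x = ereal t"
    using local_power_block_shift[OF x x0] support by simp
  then show ?thesis unfolding power_set_def using x x0 by force
qed

end

section \<open>Labels taken from a right closed set\<close>

lemma right_closed_countable_dense_below:
  assumes rc: "right_closed \<sigma>"
  obtains D where "countable D" "D \<subseteq> \<sigma>" "\<And>t e. t \<in> \<sigma> \<Longrightarrow> 0 < e \<Longrightarrow> \<exists>d\<in>D. t - e < d \<and> d \<le> t"
proof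
  define a where "a q = Sup (\<sigma> \<inter> {..q})" for q :: real
  define b where "b q = Inf (\<sigma> \<inter> {q..})" for q :: real
  define D where "D = a ` {q\<in>\<rat>. \<sigma> \<inter> {..q} \<noteq> {}} \<union> b ` {q\<in>\<rat>. b q \<in> \<sigma>}"
  show "countable D" unfolding D_def
    by (intro countable_Un countable_image countable_subset[OF _ countable_rat]) auto
  have a: "a q \<in> \<sigma>" "a q \<le> q" if "\<sigma> \<inter> {..q} \<noteq> {}" for q
    using that unfolding a_def
    by (auto intro!: right_closed_SupI[OF rc] bdd_aboveI[of _ q] cSup_least)
  then show "D \<subseteq> \<sigma>" unfolding D_def by auto
  fix t e :: real assume t: "t \<in> \<sigma>" and e: "0 < e"
  show "\<exists>d\<in>D. t - e < d \<and> d \<le> t"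
  proof (cases "\<exists>t'\<in>\<sigma>. t - e < t' \<and> t' < t")
    case True
    then obtain t' q where t': "t' \<in> \<sigma>" "t - e < t'" and q: "q \<in> \<rat>" "t' < q" "q < t"
      using Rats_dense_in_real by meson
    then have ne: "\<sigma> \<inter> {..q} \<noteq> {}" by auto
    have "t' \<le> a q" unfolding a_def using t' q by (intro cSup_upper) (auto intro: bdd_aboveI[of _ q])
    moreover have "a q \<in> D" unfolding D_def using q ne by auto
    ultimately show ?thesis using t' q a(2)[OF ne] by (intro bexI[of _ "a q"]) auto
  next
    case False
    obtain q where q: "q \<in> \<rat>" "t - e < q" "q < t" using Rats_dense_in_real[of "t - e" t] e by auto
    have "b q = t" unfolding b_def
    proof (rule cInf_eq_minimum)
      show "t \<in> \<sigma> \<inter> {q..}" using t q by auto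
      show "t \<le> y" if "y \<in> \<sigma> \<inter> {q..}" for y using False that q by force
    qed
    then have "t \<in> D" unfolding D_def using q t by auto
    then show ?thesis using e by (intro bexI[of _ t]) auto
  qed
qed

lemma right_closed_labelling:
  assumes "right_closed \<sigma>" "1 \<in> \<sigma>"
  obtains s :: "nat \<Rightarrow> real" where "range s \<subseteq> \<sigma>" "1 \<in> range s"
    "\<And>t e. t \<in> \<sigma> \<Longrightarrow> 0 < e \<Longrightarrow> \<exists>i. t - e < s i \<and> s i \<le> t"
proof -
  obtain D where D: "countable D" "D \<subseteq> \<sigma>"
    and dense: "\<And>t e. t \<in> \<sigma> \<Longrightarrow> 0 < e \<Longrightarrow> \<exists>d\<in>D. t - e < d \<and> d \<le> t"
    using right_closed_countable_dense_below[OF assms(1)] by blast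
  have range: "range (from_nat_into (insert 1 D)) = insert 1 D" using D(1) by simp
  show ?thesis
  proof (rule that)
    show "range (from_nat_into (insert 1 D)) \<subseteq> \<sigma>" using range D(2) assms(2) by simp
    show "1 \<in> range (from_nat_into (insert 1 D))" using range by simp
    show "\<exists>i. t - e < from_nat_into (insert 1 D) i \<and> from_nat_into (insert 1 D) i \<le> t"
      if "t \<in> \<sigma>" "0 < e" for t e
      using dense[OF that] range by (metis insertCI rangeE)
  qed
qed

theorem theoremB:
  fixes \<sigma> :: "real set"
  assumes "right_closed \<sigma>" and "\<sigma> \<subseteq> {0..1}" and "1 \<in> \<sigma>"
  shows "\<exists>T. bounded_op T \<and> quasinilpotent T \<and> power_set T = ereal ` \<sigma>"
proof -
  obtain s :: "nat \<Rightarrow> real" where s: "range s \<subseteq> \<sigma>" "1 \<in> range s"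
    and dense: "\<And>t e. t \<in> \<sigma> \<Longrightarrow> 0 < e \<Longrightarrow> \<exists>i. t - e < s i \<and> s i \<le> t"
    using right_closed_labelling[OF assms(1,3)] by blast
  have "s i \<in> {0..1}" for i using s(1) assms(2) by blast
  then have labels: "\<forall>i. 0 \<le> s i \<and> s i \<le> 1" by simp
  obtain i1 where "s i1 = 1" using s(2) by (metis rangeE)
  then interpret shift_labels s by unfold_locales (use labels in blast)+
  have "ereal ` \<sigma> \<subseteq> power_set (block_shift s)"
    using dense by (auto intro!: ereal_in_power_set_block_shift)
  then have "power_set (block_shift s) = ereal ` \<sigma>"
    using power_set_block_shift_subset[OF assms(1) s(1)] by blast
  then show ?thesis using block_shift_bounded block_shift_quasinilpotent labels by blast
qed

end
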